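(* Let $(X,\phi)$ be a flow on a compact metric space $(X,d)$. Then $$\overline{\mathrm{mdim}}_M(\phi,X,d)=\overline{\mathrm{mdim}}^B(\phi,X,d).$$
   Context: A flow: $\phi:X\times\mathbb{R}\to X$ continuous, $\phi_t(x)=\phi(x,t)$, $\phi_0=\mathrm{id}$, $\phi_{t+s}=\phi_t\circ\phi_s$. $d_t(x,y)=\max_{s\in[0,t]}d(\phi_sx,\phi_sy)$, $B_t(x,\epsilon,\phi)=\{y:d_t(x,y)<\epsilon\}$. $r_t(\phi,X,d,\epsilon)$ is the minimal cardinality of $E\subset X$ with every $x\in X$ satisfying $d_t(x,y)<\epsilon$ for some $y\in E$; $r(\phi,X,d,\epsilon)=\limsup_{t\to\infty}\frac1t\log r_t(\phi,X,d,\epsilon)$; $\overline{\mathrm{mdim}}_M(\phi,X,d)=\limsup_{\epsilon\to0}\frac{r(\phi,X,d,\epsilon)}{\log(1/\epsilon)}$. Bowen upper metric mean dimension of $Z\subset X$: for $\lambda\in\mathbb{R}$, $N\in\mathbb{N}$, $\epsilon>0$, $M(\phi,d,Z,\lambda,N,\epsilon)=\inf\sum_{i\in I}e^{-n_i\lambda}$ over finite or countable families $\{B_{n_i}(x_i,\epsilon,\phi)\}_{i\in I}$ covering $Z$ with $n_i\ge N$; $M(\phi,d,Z,\lambda,\epsilon)=\lim_{N\to\infty}M(\phi,d,Z,\lambda,N,\epsilon)$; $M(\phi,d,Z,\epsilon)=\inf\{\lambda:M(\phi,d,Z,\lambda,\epsilon)=0\}$; $\overline{\mathrm{mdim}}^B(\phi,Z,d)=\limsup_{\epsilon\to0}\frac{M(\phi,d,Z,\epsilon)}{\log(1/\epsilon)}$.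 *)

theory Defs
  imports "HOL-Analysis.Analysis"
begin

definition is_flow :: "'a set \<Rightarrow> ('a \<Rightarrow> 'a \<Rightarrow> real) \<Rightarrow> ('a \<Rightarrow> real \<Rightarrow> 'a) \<Rightarrow> bool" where
  "is_flow X d \<phi> \<longleftrightarrow>
     continuous_map (prod_topology (Metric_space.mtopology X d) euclideanreal)
                    (Metric_space.mtopology X d) (\<lambda>(x,t). \<phi> x t)
   \<and> (\<forall>x\<in>X. \<phi> x 0 = x)
   \<and> (\<forall>x\<in>X. \<forall>t s. \<phi> x (t + s) = \<phi> (\<phi> x s) t)"

definition bowen_dist :: "('a \<Rightarrow> 'a \<Rightarrow> real) \<Rightarrow> ('a \<Rightarrow> real \<Rightarrow> 'a) \<Rightarrow> real \<Rightarrow> 'a \<Rightarrow> 'a \<Rightarrow> real" where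
  "bowen_dist d \<phi> t x y = (SUP s\<in>{0..t}. d (\<phi> x s) (\<phi> y s))"

definition bowen_ball :: "'a set \<Rightarrow> ('a \<Rightarrow> 'a \<Rightarrow> real) \<Rightarrow> ('a \<Rightarrow> real \<Rightarrow> 'a) \<Rightarrow> real \<Rightarrow> 'a \<Rightarrow> real \<Rightarrow> 'a set" where
  "bowen_ball X d \<phi> t x \<epsilon> = {y\<in>X. bowen_dist d \<phi> t x y < \<epsilon>}"

definition span_num :: "'a set \<Rightarrow> ('a \<Rightarrow> 'a \<Rightarrow> real) \<Rightarrow> ('a \<Rightarrow> real \<Rightarrow> 'a) \<Rightarrow> real \<Rightarrow> real \<Rightarrow> nat" where
  "span_num X d \<phi> t \<epsilon> = Inf {card E | E. finite E \<and> E \<subseteq> X \<and>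
       (\<forall>x\<in>X. \<exists>y\<in>E. bowen_dist d \<phi> t x y < \<epsilon>)}"

definition span_rate :: "'a set \<Rightarrow> ('a \<Rightarrow> 'a \<Rightarrow> real) \<Rightarrow> ('a \<Rightarrow> real \<Rightarrow> 'a) \<Rightarrow> real \<Rightarrow> ereal" where
  "span_rate X d \<phi> \<epsilon> =
     Limsup at_top (\<lambda>t::real. ereal (ln (real (span_num X d \<phi> t \<epsilon>)) / t))"

definition upper_mdim_M :: "('a \<Rightarrow> real \<Rightarrow> 'a) \<Rightarrow> 'a set \<Rightarrow> ('a \<Rightarrow> 'a \<Rightarrow> real) \<Rightarrow> ereal" where
  "upper_mdim_M \<phi> X d =
     Limsup (at_right 0) (\<lambda>\<epsilon>. span_rate X d \<phi> \<epsilon> / ereal (ln (1 / \<epsilon>)))"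

definition bowen_M_N :: "'a set \<Rightarrow> ('a \<Rightarrow> real \<Rightarrow> 'a) \<Rightarrow> ('a \<Rightarrow> 'a \<Rightarrow> real) \<Rightarrow> 'a set
     \<Rightarrow> real \<Rightarrow> nat \<Rightarrow> real \<Rightarrow> ennreal" where
  "bowen_M_N X \<phi> d Z lam N \<epsilon> =
     (INF (I, x, n) \<in> {(I :: nat set, x :: nat \<Rightarrow> 'a, n :: nat \<Rightarrow> nat).
          (\<forall>i\<in>I. x i \<in> X \<and> n i \<ge> N) \<and> Z \<subseteq> (\<Union>i\<in>I. bowen_ball X d \<phi> (real (n i)) (x i) \<epsilon>)}.
        infsum (\<lambda>i. ennreal (exp (- real (n i) * lam))) I)"

definition bowen_M_lam :: "'a set \<Rightarrow> ('a \<Rightarrow> real \<Rightarrow> 'a) \<Rightarrow> ('a \<Rightarrow> 'a \<Rightarrow> real) \<Rightarrow> 'a set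
     \<Rightarrow> real \<Rightarrow> real \<Rightarrow> ennreal" where
  "bowen_M_lam X \<phi> d Z lam \<epsilon> = lim (\<lambda>N. bowen_M_N X \<phi> d Z lam N \<epsilon>)"

definition bowen_M :: "'a set \<Rightarrow> ('a \<Rightarrow> real \<Rightarrow> 'a) \<Rightarrow> ('a \<Rightarrow> 'a \<Rightarrow> real) \<Rightarrow> 'a set
     \<Rightarrow> real \<Rightarrow> ereal" where
  "bowen_M X \<phi> d Z \<epsilon> = Inf {ereal lam | lam. bowen_M_lam X \<phi> d Z lam \<epsilon> = 0}"

definition upper_mdim_B :: "'a set \<Rightarrow> ('a \<Rightarrow> real \<Rightarrow> 'a) \<Rightarrow> 'a set \<Rightarrow> ('a \<Rightarrow> 'a \<Rightarrow> real) \<Rightarrow> ereal" where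
  "upper_mdim_B X \<phi> Z d =
     Limsup (at_right 0) (\<lambda>\<epsilon>. bowen_M X \<phi> d Z \<epsilon> / ereal (ln (1 / \<epsilon>)))"

end

theory Submission
  imports Defs "HOL-Real_Asymp.Real_Asymp"
begin

(* Spanning sets at time n give covers of X by Bowen balls of the single length n, hence
   M(\<epsilon>) \<le> r(\<epsilon>). Conversely, if M_\<lambda>(\<epsilon>) = 0 there is a finite cover by Bowen balls
   B_{n_i}(x_i, \<epsilon>) with \<Sum> e^{-n_i \<lambda>} < 1. Following the orbit of a point from ball to ball
   codes it, up to time T, by a word over the cover whose lengths n_i add up to at most
   T + max n_i; points with the same word stay 2\<epsilon>-close up to time T, and the condition on
   the weights bounds the number of such words by (T + 2) e^{(T + max n_i) \<lambda>}, so
   r(3\<epsilon>) \<le> \<lambda>. Finally ln (1/(3\<epsilon>)) / ln (1/\<epsilon>) \<rightarrow> 1, so the two inequalities give the same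
   limsup. *)

lemma card_weighted_lists_le:
  fixes F :: "'i set" and n :: "'i \<Rightarrow> real" and lam L :: real
  assumes F: "finite F" and lam: "0 \<le> lam" and sum: "(\<Sum>i\<in>F. exp (- n i * lam)) \<le> 1"
  shows "real (card {w. set w \<subseteq> F \<and> length w = k \<and> sum_list (map n w) \<le> L}) \<le> exp (L * lam)"
proof (induction k arbitrary: L)
  case 0
  have "{w. set w \<subseteq> F \<and> length w = 0 \<and> sum_list (map n w) \<le> L} = (if 0 \<le> L then {[]} else {})"
    by auto
  then show ?case using lam by simp
next
  case (Suc k)
  define A where "A L = {w. set w \<subseteq> F \<and> length w = k \<and> sum_list (map n w) \<le> L}" for L
  have "{w. set w \<subseteq> F \<and> length w = Suc k \<and> sum_list (map n w) \<le> L} = (\<Union>i\<in>F. (#) i ` A (L - n i))"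
    by (auto simp: A_def length_Suc_conv)
  then have "card {w. set w \<subseteq> F \<and> length w = Suc k \<and> sum_list (map n w) \<le> L}
      \<le> (\<Sum>i\<in>F. card ((#) i ` A (L - n i)))"
    using card_UN_le[OF F] by simp
  also have "\<dots> = (\<Sum>i\<in>F. card (A (L - n i)))"
    by (intro sum.cong refl card_image) auto
  finally have "real (card {w. set w \<subseteq> F \<and> length w = Suc k \<and> sum_list (map n w) \<le> L})
      \<le> (\<Sum>i\<in>F. real (card (A (L - n i))))"
    by (simp only: of_nat_le_iff of_nat_sum[symmetric])
  also have "\<dots> \<le> (\<Sum>i\<in>F. exp ((L - n i) * lam))"
    by (intro sum_mono) (use Suc.IH in \<open>simp add: A_def\<close>)
  also have "\<dots> = exp (L * lam) * (\<Sum>i\<in>F. exp (- n i * lam))"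
    by (simp add: sum_distrib_left exp_add[symmetric] algebra_simps)
  also have "\<dots> \<le> exp (L * lam)"
    using sum by simp
  finally show ?case .
qed

lemma card_weighted_lists_le_bounded_length:
  fixes F :: "'i set" and n :: "'i \<Rightarrow> real" and lam L :: real
  assumes F: "finite F" and lam: "0 \<le> lam" and sum: "(\<Sum>i\<in>F. exp (- n i * lam)) \<le> 1"
  shows "real (card {w. set w \<subseteq> F \<and> length w \<le> K \<and> sum_list (map n w) \<le> L})
           \<le> (real K + 1) * exp (L * lam)"
proof -
  have "{w. set w \<subseteq> F \<and> length w \<le> K \<and> sum_list (map n w) \<le> L}
      = (\<Union>k\<le>K. {w. set w \<subseteq> F \<and> length w = k \<and> sum_list (map n w) \<le> L})"
    by auto
  then have "card {w. set w \<subseteq> F \<and> length w \<le> K \<and> sum_list (map n w) \<le> L}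
      \<le> (\<Sum>k\<le>K. card {w. set w \<subseteq> F \<and> length w = k \<and> sum_list (map n w) \<le> L})"
    using card_UN_le[of "{..K}"] by simp
  then have "real (card {w. set w \<subseteq> F \<and> length w \<le> K \<and> sum_list (map n w) \<le> L})
      \<le> (\<Sum>k\<le>K. real (card {w. set w \<subseteq> F \<and> length w = k \<and> sum_list (map n w) \<le> L}))"
    by (simp only: of_nat_le_iff of_nat_sum[symmetric])
  also have "\<dots> \<le> (\<Sum>k\<le>K. exp (L * lam))"
    by (intro sum_mono card_weighted_lists_le[OF F lam sum])
  finally show ?thesis
    by (simp add: add.commute)
qed

lemma bracketing_index_exists:
  fixes f :: "nat \<Rightarrow> 'a :: linorder"
  assumes "0 < K" "f 0 \<le> s" "s \<le> f K"
  obtains j where "j < K" "f j \<le> s" "s \<le> f (Suc j)"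
  using assms
proof (induction K)
  case (Suc K)
  show ?case
  proof (cases "0 < K \<and> s \<le> f K")
    case True
    then show ?thesis using Suc by (meson less_SucI)
  next
    case False
    then have "f K \<le> s" using Suc.prems(3) by (cases K) auto
    then show ?thesis using Suc.prems(1,4) by blast
  qed
qed simp

lemma first_passage_bounds:
  fixes t :: "nat \<Rightarrow> nat" and T :: real
  assumes t0: "t 0 = 0" and step: "\<And>k. t k < t (Suc k)" and jump: "\<And>k. t (Suc k) \<le> t k + N"
    and T: "0 < T"
  defines "K \<equiv> LEAST k. T \<le> real (t k)"
  shows "0 < K" "K \<le> nat \<lceil>T\<rceil>" "T \<le> real (t K)" "real (t K) \<le> T + real N"
proof -
  have "k \<le> t k" for k
    by (induction k) (use step in \<open>auto simp: Suc_le_eq intro: le_less_trans\<close>)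
  then have "T \<le> real (t (nat \<lceil>T\<rceil>))"
    using real_nat_ceiling_ge[of T] of_nat_mono by (smt (verit))
  then show "K \<le> nat \<lceil>T\<rceil>" and T_le: "T \<le> real (t K)"
    unfolding K_def by (auto intro: Least_le LeastI)
  show "0 < K"
    using T_le T t0 by (cases K) auto
  then obtain k where k: "K = Suc k"
    using gr0_implies_Suc by blast
  then have "real (t k) < T"
    using not_less_Least[of k "\<lambda>k. T \<le> real (t k)"] by (simp add: K_def)
  moreover have "real (t (Suc k)) \<le> real (t k) + real N"
    using jump[of k] by (simp only: of_nat_add[symmetric] of_nat_le_iff)
  ultimately show "real (t K) \<le> T + real N"
    using k by simp
qed

lemma ereal_divide_le_mult_divide:
  fixes M :: ereal
  assumes "0 \<le> M" "0 < a" "0 < b" "b \<le> c * a"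
  shows "M / ereal a \<le> ereal c * (M / ereal b)"
proof -
  have "inverse a \<le> c * inverse b" using assms by (simp add: field_simps)
  then have "M * ereal (inverse a) \<le> M * ereal (c * inverse b)"
    using assms(1) by (intro ereal_mult_left_mono) auto
  then show ?thesis using assms(2,3)
    by (simp add: divide_ereal_def mult.commute mult.left_commute)
qed

lemma ereal_le_if_le_mult_gt_1:
  fixes A B :: ereal
  assumes B: "0 \<le> B" and le: "\<And>c. 1 < c \<Longrightarrow> A \<le> ereal c * B"
  shows "A \<le> B"
proof (cases B)
  case (real b)
  show ?thesis
  proof (rule ereal_le_epsilon2)
    fix e :: real assume e: "0 < e"
    have "0 \<le> b" using B real by simp
    then have "A \<le> ereal ((1 + e / (b + 1)) * b)" using le[of "1 + e / (b + 1)"] e real by simp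
    also have "(1 + e / (b + 1)) * b \<le> b + e"
      using \<open>0 \<le> b\<close> e by (simp add: field_simps)
    finally show "A \<le> B + ereal e" using real by simp
  qed
qed (use B in auto)

lemma Limsup_at_right_0_div_ln_mono:
  fixes f g :: "real \<Rightarrow> ereal"
  assumes "\<forall>\<^sub>F \<epsilon> in at_right 0. f \<epsilon> \<le> g \<epsilon>"
  shows "Limsup (at_right 0) (\<lambda>\<epsilon>. f \<epsilon> / ereal (ln (1 / \<epsilon>)))
       \<le> Limsup (at_right 0) (\<lambda>\<epsilon>. g \<epsilon> / ereal (ln (1 / \<epsilon>)))"
  by (rule Limsup_mono)
    (use eventually_at_right_real[OF zero_less_one] assms in \<open>eventually_elim, simp\<close>)

lemma Limsup_at_right_0_div_ln_rescale:
  fixes h :: "real \<Rightarrow> ereal" and a :: real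
  assumes a: "1 \<le> a" and h: "\<forall>\<^sub>F \<epsilon> in at_right 0. 0 \<le> h \<epsilon>"
  shows "Limsup (at_right 0) (\<lambda>\<epsilon>. h \<epsilon> / ereal (ln (1 / \<epsilon>)))
       \<le> Limsup (at_right 0) (\<lambda>\<epsilon>. h (a * \<epsilon>) / ereal (ln (1 / \<epsilon>)))"
proof -
  define f where "f \<epsilon> = h \<epsilon> / ereal (ln (1 / \<epsilon>))" for \<epsilon>
  define g where "g \<epsilon> = h (a * \<epsilon>) / ereal (ln (1 / \<epsilon>))" for \<epsilon>
  have scale: "filtermap ((*) a) (at_right 0) = at_right 0"
    using filtermap_times_pos_at_right[of a 0] a by simp
  have "inj ((*) a)"
    using a by (auto intro: injI)
  from Limsup_filtermap_eq[OF this, of "at_right 0" f]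
  have f_scale: "Limsup (at_right 0) f = Limsup (at_right 0) (\<lambda>\<epsilon>. f (a * \<epsilon>))"
    unfolding scale .
  have "\<forall>\<^sub>F \<epsilon> in filtermap ((*) a) (at_right 0). 0 \<le> h \<epsilon>"
    using h unfolding scale .
  then have h_scaled: "\<forall>\<^sub>F \<epsilon> in at_right 0. 0 \<le> h (a * \<epsilon>)"
    unfolding eventually_filtermap .
  have ln_pos: "\<forall>\<^sub>F \<epsilon> in at_right 0. 0 < ln (1 / (\<epsilon>::real))"
    by real_asymp
  have ln_scaled_pos: "\<forall>\<^sub>F \<epsilon> in at_right 0. 0 < ln (1 / (a * \<epsilon>))"
    using a by real_asymp
  have "\<forall>\<^sub>F \<epsilon> in at_right 0. 0 \<le> g \<epsilon>"
    using h_scaled ln_pos by eventually_elim (simp add: g_def)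
  then have "0 \<le> Limsup (at_right 0) g"
    by (intro le_Limsup) auto
  moreover have "Limsup (at_right 0) f \<le> ereal c * Limsup (at_right 0) g" if c: "1 < c" for c
  proof -
    have "\<forall>\<^sub>F \<epsilon> in at_right 0. ln (1 / \<epsilon>) \<le> c * ln (1 / (a * \<epsilon>))"
      using a c by real_asymp
    with h_scaled ln_pos ln_scaled_pos have "\<forall>\<^sub>F \<epsilon> in at_right 0. f (a * \<epsilon>) \<le> ereal c * g \<epsilon>"
      by eventually_elim (simp add: f_def g_def ereal_divide_le_mult_divide)
    then have "Limsup (at_right 0) (\<lambda>\<epsilon>. f (a * \<epsilon>)) \<le> Limsup (at_right 0) (\<lambda>\<epsilon>. ereal c * g \<epsilon>)"
      by (rule Limsup_mono)
    also have "\<dots> = ereal c * Limsup (at_right 0) g"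
      by (rule Limsup_ereal_mult_left) (use c in auto)
    finally show ?thesis
      unfolding f_scale .
  qed
  ultimately show ?thesis
    unfolding f_def g_def by (rule ereal_le_if_le_mult_gt_1)
qed

lemma Limsup_ln_div_le_of_bound:
  fixes f :: "real \<Rightarrow> real" and a C lam :: real
  assumes a: "0 \<le> a" and bound: "\<forall>\<^sub>F T in at_top. 0 < f T \<and> f T \<le> (T + a) * exp ((T + C) * lam)"
  shows "Limsup at_top (\<lambda>T. ereal (ln (f T) / T)) \<le> ereal lam"
proof -
  define g where "g T = ln (T + a) / T + lam + C * lam / T" for T
  have "\<forall>\<^sub>F T in at_top. ereal (ln (f T) / T) \<le> ereal (g T)"
    using bound eventually_gt_at_top[of 0]
  proof eventually_elim
    case (elim T)
    then have "ln (f T) \<le> ln ((T + a) * exp ((T + C) * lam))"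
      by (subst ln_le_cancel_iff) auto
    also have "\<dots> = ln (T + a) + (T + C) * lam"
      using elim a by (simp add: ln_mult)
    finally have "ln (f T) / T \<le> (ln (T + a) + (T + C) * lam) / T"
      using elim by (intro divide_right_mono) auto
    then show ?case using elim by (simp add: g_def field_simps)
  qed
  then have "Limsup at_top (\<lambda>T. ereal (ln (f T) / T)) \<le> Limsup at_top (\<lambda>T. ereal (g T))"
    by (rule Limsup_mono)
  also have "\<dots> = ereal lam"
    by (rule lim_imp_Limsup) (use a in \<open>auto simp: g_def intro!: tendsto_ereal, real_asymp\<close>)
  finally show ?thesis .
qed

lemma incseq_bowen_M_N: "incseq (\<lambda>N. bowen_M_N X \<phi> d Z lam N \<epsilon>)"
  unfolding incseq_def bowen_M_N_def
  by (intro allI impI INF_superset_mono) (auto intro: order_trans)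

text \<open>Monotonicity in \<open>N\<close> makes the \<open>lim\<close> in \<^const>\<open>bowen_M_lam\<close> a genuine limit.\<close>
lemma bowen_M_N_le_bowen_M_lam: "bowen_M_N X \<phi> d Z lam N \<epsilon> \<le> bowen_M_lam X \<phi> d Z lam \<epsilon>"
proof -
  have "(\<lambda>N. bowen_M_N X \<phi> d Z lam N \<epsilon>) \<longlonglongrightarrow> (SUP N. bowen_M_N X \<phi> d Z lam N \<epsilon>)"
    by (rule LIMSEQ_SUP[OF incseq_bowen_M_N])
  then have "bowen_M_lam X \<phi> d Z lam \<epsilon> = (SUP N. bowen_M_N X \<phi> d Z lam N \<epsilon>)"
    unfolding bowen_M_lam_def by (rule limI)
  then show ?thesis by (metis SUP_upper UNIV_I)
qed

locale compact_flow = Metric_space X d for X and d :: "'a \<Rightarrow> 'a \<Rightarrow> real" +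
  fixes \<phi> :: "'a \<Rightarrow> real \<Rightarrow> 'a"
  assumes compact: "compact_space mtopology" and nonempty: "X \<noteq> {}" and flow: "is_flow X d \<phi>"
begin

lemma continuous_map_flow:
  "continuous_map (prod_topology mtopology euclideanreal) mtopology (\<lambda>(x, t). \<phi> x t)"
  using flow unfolding is_flow_def by blast

lemma flow_in: "x \<in> X \<Longrightarrow> \<phi> x t \<in> X"
  using continuous_map_image_subset_topspace[OF continuous_map_flow] by auto

lemma flow_zero: "x \<in> X \<Longrightarrow> \<phi> x 0 = x"
  using flow unfolding is_flow_def by blast

lemma flow_add: "x \<in> X \<Longrightarrow> \<phi> x (t + s) = \<phi> (\<phi> x s) t"
  using flow unfolding is_flow_def by blast

lemma bdd_above_flow_dist:
  assumes "x \<in> X" "y \<in> X"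
  shows "bdd_above ((\<lambda>s. d (\<phi> x s) (\<phi> y s)) ` S)"
proof -
  have "mbounded X"
    using compact compactin_imp_mbounded unfolding compact_space_def by simp
  then obtain B where "\<forall>x\<in>X. \<forall>y\<in>X. d x y \<le> B"
    unfolding mbounded_alt by blast
  then show ?thesis using assms by (auto intro!: bdd_aboveI2 flow_in)
qed

lemma flow_dist_le_bowen_dist:
  "x \<in> X \<Longrightarrow> y \<in> X \<Longrightarrow> s \<in> {0..t} \<Longrightarrow> d (\<phi> x s) (\<phi> y s) \<le> bowen_dist d \<phi> t x y"
  unfolding bowen_dist_def by (rule cSUP_upper[OF _ bdd_above_flow_dist])

lemma bowen_dist_le:
  "0 \<le> t \<Longrightarrow> (\<And>s. s \<in> {0..t} \<Longrightarrow> d (\<phi> x s) (\<phi> y s) \<le> c) \<Longrightarrow> bowen_dist d \<phi> t x y \<le> c"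
  unfolding bowen_dist_def by (rule cSUP_least) auto

lemma bowen_dist_commute: "bowen_dist d \<phi> t x y = bowen_dist d \<phi> t y x"
  unfolding bowen_dist_def by (simp add: commute)

lemma bowen_dist_self: "0 \<le> t \<Longrightarrow> x \<in> X \<Longrightarrow> bowen_dist d \<phi> t x x = 0"
  unfolding bowen_dist_def using flow_in by simp

lemma bowen_dist_mono:
  "0 \<le> t \<Longrightarrow> t \<le> t' \<Longrightarrow> x \<in> X \<Longrightarrow> y \<in> X \<Longrightarrow> bowen_dist d \<phi> t x y \<le> bowen_dist d \<phi> t' x y"
  by (rule bowen_dist_le) (auto intro: flow_dist_le_bowen_dist)

lemma continuous_map_flow_dist:
  assumes "x \<in> X"
  shows "continuous_map (prod_topology mtopology euclideanreal) euclideanreal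
           (\<lambda>(y, s). d (\<phi> x s) (\<phi> y s))"
proof -
  have "continuous_map (prod_topology mtopology euclideanreal) (prod_topology mtopology euclideanreal)
          (\<lambda>p. (x, snd p))"
    using assms by (simp add: continuous_map_paired continuous_map_snd)
  from continuous_map_compose[OF this continuous_map_flow]
  have "continuous_map (prod_topology mtopology euclideanreal) mtopology (\<lambda>p. \<phi> x (snd p))"
    by (simp add: o_def)
  moreover have "continuous_map Z euclideanreal (\<lambda>z. d (f z) (g z))"
    if "continuous_map Z mtopology f" "continuous_map Z mtopology g" for Z f g
    using continuous_map_mdist[of Z "metric (X, d)" f g] that by simp
  ultimately show ?thesis
    using continuous_map_flow by (simp add: case_prod_unfold)
qed

lemma openin_bowen_ball:
  assumes x: "x \<in> X" and t: "0 \<le> t"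
  shows "openin mtopology (bowen_ball X d \<phi> t x \<epsilon>)"
  unfolding openin_subopen[of _ "bowen_ball X d \<phi> t x \<epsilon>"]
proof
  fix y0 assume "y0 \<in> bowen_ball X d \<phi> t x \<epsilon>"
  then have y0: "y0 \<in> X" and "bowen_dist d \<phi> t x y0 < \<epsilon>"
    by (auto simp: bowen_ball_def)
  then obtain r where r: "bowen_dist d \<phi> t x y0 < r" "r < \<epsilon>"
    using dense by blast
  define W where "W = {p \<in> topspace (prod_topology mtopology euclideanreal).
                         (\<lambda>(y, s). d (\<phi> x s) (\<phi> y s)) p \<in> {..<r}}"
  have "openin (prod_topology mtopology euclideanreal) W"
    unfolding W_def by (rule openin_continuous_map_preimage[OF continuous_map_flow_dist[OF x]]) simp
  \<comment> \<open>by the tube lemma, closeness along \<open>{y0} \<times> [0, t]\<close> persists on a neighbourhood of \<open>y0\<close>\<close>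
  moreover have "{y0} \<times> {0..t} \<subseteq> W"
    using flow_dist_le_bowen_dist[OF x y0] r y0 by (force simp: W_def)
  ultimately have "\<exists>U V. openin mtopology U \<and> openin euclideanreal V \<and> y0 \<in> U \<and> {0..t} \<subseteq> V \<and> U \<times> V \<subseteq> W"
    using y0 by (intro tube_lemma_right) auto
  then obtain U V where U: "openin mtopology U" "y0 \<in> U" "{0..t} \<subseteq> V" "U \<times> V \<subseteq> W"
    by blast
  have "U \<subseteq> bowen_ball X d \<phi> t x \<epsilon>"
  proof
    fix y assume "y \<in> U"
    then have "y \<in> X" using openin_subset[OF U(1)] by auto
    have "bowen_dist d \<phi> t x y \<le> r"
      using t \<open>y \<in> U\<close> U(3,4) by (intro bowen_dist_le) (force simp: W_def)+
    then show "y \<in> bowen_ball X d \<phi> t x \<epsilon>"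
      using r \<open>y \<in> X\<close> by (simp add: bowen_ball_def)
  qed
  then show "\<exists>T. openin mtopology T \<and> y0 \<in> T \<and> T \<subseteq> bowen_ball X d \<phi> t x \<epsilon>"
    using U by blast
qed

lemma finite_subcover:
  assumes "X \<subseteq> (\<Union>i\<in>I. B i)" and "\<And>i. i \<in> I \<Longrightarrow> openin mtopology (B i)"
  obtains F where "F \<subseteq> I" "finite F" "X \<subseteq> (\<Union>i\<in>F. B i)"
proof -
  obtain \<F> where "finite \<F>" "\<F> \<subseteq> B ` I" "X \<subseteq> \<Union>\<F>"
    using compact[unfolded compact_space_alt, rule_format, of "B ` I"] assms by auto
  then show ?thesis using that by (metis finite_subset_image)
qed

definition spanning :: "real \<Rightarrow> real \<Rightarrow> 'a set \<Rightarrow> bool" where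
  "spanning t \<epsilon> E \<longleftrightarrow> finite E \<and> E \<subseteq> X \<and> (\<forall>x\<in>X. \<exists>y\<in>E. bowen_dist d \<phi> t x y < \<epsilon>)"

lemma span_num_eq_Inf_spanning: "span_num X d \<phi> t \<epsilon> = Inf {card E | E. spanning t \<epsilon> E}"
  unfolding span_num_def spanning_def by simp

lemma spanning_exists:
  assumes t: "0 \<le> t" and \<epsilon>: "0 < \<epsilon>"
  shows "\<exists>E. spanning t \<epsilon> E"
proof -
  have "X \<subseteq> (\<Union>y\<in>X. bowen_ball X d \<phi> t y \<epsilon>)"
    using bowen_dist_self[OF t] \<epsilon> by (auto simp: bowen_ball_def)
  then obtain F where F: "F \<subseteq> X" "finite F" "X \<subseteq> (\<Union>y\<in>F. bowen_ball X d \<phi> t y \<epsilon>)"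
    by (rule finite_subcover) (auto intro: openin_bowen_ball[OF _ t])
  have "\<exists>y\<in>F. bowen_dist d \<phi> t x y < \<epsilon>" if "x \<in> X" for x
  proof -
    from that F(3) obtain y where "y \<in> F" "x \<in> bowen_ball X d \<phi> t y \<epsilon>"
      by blast
    then have "bowen_dist d \<phi> t x y < \<epsilon>"
      by (simp add: bowen_ball_def bowen_dist_commute)
    with \<open>y \<in> F\<close> show ?thesis ..
  qed
  then show ?thesis using F(1,2) unfolding spanning_def by blast
qed

lemma span_num_attained:
  assumes "0 \<le> t" "0 < \<epsilon>"
  obtains E where "spanning t \<epsilon> E" "card E = span_num X d \<phi> t \<epsilon>"
proof -
  have "{card E | E. spanning t \<epsilon> E} \<noteq> {}"
    using spanning_exists[OF assms] by blast
  from Inf_nat_def1[OF this] show ?thesis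
    using that unfolding span_num_eq_Inf_spanning by auto
qed

lemma span_num_le_card: "spanning t \<epsilon> E \<Longrightarrow> span_num X d \<phi> t \<epsilon> \<le> card E"
  unfolding span_num_eq_Inf_spanning by (rule cInf_lower) auto

lemma span_num_pos:
  assumes "0 \<le> t" "0 < \<epsilon>"
  shows "0 < span_num X d \<phi> t \<epsilon>"
proof -
  obtain E where "spanning t \<epsilon> E" "card E = span_num X d \<phi> t \<epsilon>"
    using span_num_attained[OF assms] .
  then show ?thesis using nonempty by (auto simp: spanning_def card_gt_0_iff)
qed

lemma span_rate_nonneg:
  assumes "0 < \<epsilon>"
  shows "0 \<le> span_rate X d \<phi> \<epsilon>"
proof -
  have "\<forall>\<^sub>F t in at_top. ereal 0 \<le> ereal (ln (real (span_num X d \<phi> t \<epsilon>)) / t)"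
    using eventually_gt_at_top[of 0]
    by eventually_elim (use span_num_pos assms in \<open>simp add: Suc_le_eq\<close>)
  then show ?thesis
    unfolding span_rate_def zero_ereal_def by (intro le_Limsup) auto
qed

lemma bowen_M_N_le_span_num:
  assumes "N \<le> n" "0 < \<epsilon>"
  shows "bowen_M_N X \<phi> d X lam N \<epsilon> \<le> ennreal (real (span_num X d \<phi> (real n) \<epsilon>) * exp (- real n * lam))"
proof -
  obtain E where E: "spanning (real n) \<epsilon> E" "card E = span_num X d \<phi> (real n) \<epsilon>"
    by (rule span_num_attained[OF of_nat_0_le_iff assms(2)])
  then have "finite E"
    by (simp add: spanning_def)
  then obtain h where h: "bij_betw h {0..<card E} E"
    using ex_bij_betw_nat_finite by blast
  have "X \<subseteq> (\<Union>i\<in>{0..<card E}. bowen_ball X d \<phi> (real n) (h i) \<epsilon>)"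
  proof
    fix x assume "x \<in> X"
    with E(1) obtain y where "y \<in> E" "bowen_dist d \<phi> (real n) x y < \<epsilon>"
      unfolding spanning_def by blast
    moreover obtain i where "i \<in> {0..<card E}" "h i = y"
      using bij_betw_imp_surj_on[OF h] \<open>y \<in> E\<close> by (metis imageE)
    ultimately have "x \<in> bowen_ball X d \<phi> (real n) (h i) \<epsilon>"
      using \<open>x \<in> X\<close> by (simp add: bowen_ball_def bowen_dist_commute)
    with \<open>i \<in> {0..<card E}\<close> show "x \<in> (\<Union>i\<in>{0..<card E}. bowen_ball X d \<phi> (real n) (h i) \<epsilon>)"
      by blast
  qed
  moreover have "h i \<in> X" if "i \<in> {0..<card E}" for i
    using E(1) h that unfolding spanning_def bij_betw_def by blast
  ultimately have "({0..<card E}, h, \<lambda>_. n) \<in> {(I, x, m). (\<forall>i\<in>I. x i \<in> X \<and> N \<le> m i) \<and>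
          X \<subseteq> (\<Union>i\<in>I. bowen_ball X d \<phi> (real (m i)) (x i) \<epsilon>)}"
    using assms(1) by simp
  then have "bowen_M_N X \<phi> d X lam N \<epsilon> \<le> infsum (\<lambda>_. ennreal (exp (- real n * lam))) {0..<card E}"
    unfolding bowen_M_N_def by (rule INF_lower2) (simp only: prod.case order_refl)
  also have "\<dots> = ennreal (real (card E) * exp (- real n * lam))"
    by (simp add: ennreal_mult' ennreal_of_nat_eq_real_of_nat)
  finally show ?thesis by (simp only: E(2))
qed

lemma bowen_M_N_le_exp:
  assumes "N \<le> n" "0 < n" "0 < \<epsilon>" and small: "ln (real (span_num X d \<phi> (real n) \<epsilon>)) / real n < l"
  shows "bowen_M_N X \<phi> d X lam N \<epsilon> \<le> ennreal (exp (real n * (l - lam)))"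
proof -
  have "ln (real (span_num X d \<phi> (real n) \<epsilon>)) < real n * l"
    using small \<open>0 < n\<close> by (simp add: divide_less_eq mult.commute)
  then have "real (span_num X d \<phi> (real n) \<epsilon>) < exp (real n * l)"
    using span_num_pos[of "real n" \<epsilon>] \<open>0 < \<epsilon>\<close>
    by (metis exp_less_mono exp_ln of_nat_0_less_iff of_nat_0_le_iff)
  then have "real (span_num X d \<phi> (real n) \<epsilon>) * exp (- real n * lam)
      \<le> exp (real n * l) * exp (- real n * lam)"
    by simp
  also have "\<dots> = exp (real n * (l - lam))"
    by (simp add: mult_exp_exp algebra_simps)
  finally have "ennreal (real (span_num X d \<phi> (real n) \<epsilon>) * exp (- real n * lam))
      \<le> ennreal (exp (real n * (l - lam)))"
    by (rule ennreal_leI)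
  with bowen_M_N_le_span_num[OF assms(1,3)] show ?thesis
    by (rule order_trans)
qed

lemma bowen_M_lam_eq_0_if_span_rate_less:
  assumes \<epsilon>: "0 < \<epsilon>" and lam: "span_rate X d \<phi> \<epsilon> < ereal lam"
  shows "bowen_M_lam X \<phi> d X lam \<epsilon> = 0"
proof -
  obtain l where l: "span_rate X d \<phi> \<epsilon> < ereal l" "l < lam"
    using ereal_dense2[OF lam] by auto
  have "\<forall>\<^sub>F t in at_top. ln (real (span_num X d \<phi> t \<epsilon>)) / t < l"
    using Limsup_lessD[OF l(1)[unfolded span_rate_def]] by simp
  then have small: "\<forall>\<^sub>F n in sequentially. ln (real (span_num X d \<phi> (real n) \<epsilon>)) / real n < l"
    using filterlim_real_sequentially by (rule eventually_compose_filterlim)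
  have "(\<lambda>n. exp (real n * (l - lam))) \<longlonglongrightarrow> 0"
    using l(2) by real_asymp
  then have to_0: "(\<lambda>n. ennreal (exp (real n * (l - lam)))) \<longlonglongrightarrow> 0"
    using tendsto_ennrealI by fastforce
  have "bowen_M_N X \<phi> d X lam N \<epsilon> = 0" for N
  proof -
    have "\<forall>\<^sub>F n in sequentially. bowen_M_N X \<phi> d X lam N \<epsilon> \<le> ennreal (exp (real n * (l - lam)))"
      using small eventually_ge_at_top[of "max N 1"]
      by eventually_elim (use \<epsilon> in \<open>auto intro: bowen_M_N_le_exp\<close>)
    with to_0 have "bowen_M_N X \<phi> d X lam N \<epsilon> \<le> 0"
      by (intro tendsto_le[OF trivial_limit_sequentially _ tendsto_const])
    then show ?thesis
      by simp
  qed
  then show ?thesis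
    by (simp add: bowen_M_lam_def)
qed

lemma bowen_M_le_span_rate:
  assumes \<epsilon>: "0 < \<epsilon>"
  shows "bowen_M X \<phi> d X \<epsilon> \<le> span_rate X d \<phi> \<epsilon>"
proof (rule ccontr)
  assume "\<not> ?thesis"
  then obtain lam where lam: "span_rate X d \<phi> \<epsilon> < ereal lam" "ereal lam < bowen_M X \<phi> d X \<epsilon>"
    using ereal_dense2 by (meson not_le)
  have "bowen_M X \<phi> d X \<epsilon> \<le> ereal lam"
    unfolding bowen_M_def using bowen_M_lam_eq_0_if_span_rate_less[OF \<epsilon> lam(1)] by (intro Inf_lower) blast
  then show False using lam(2) by simp
qed

lemma finite_cover_if_bowen_M_lam_eq_0:
  assumes "bowen_M_lam X \<phi> d X lam \<epsilon> = 0"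
  obtains F x n where "finite (F :: nat set)" "\<forall>i\<in>F. x i \<in> X \<and> 1 \<le> n i"
    and "X \<subseteq> (\<Union>i\<in>F. bowen_ball X d \<phi> (real (n i)) (x i) \<epsilon>)"
    and "(\<Sum>i\<in>F. exp (- real (n i) * lam)) < 1"
proof -
  have "bowen_M_N X \<phi> d X lam 1 \<epsilon> < 1"
    using bowen_M_N_le_bowen_M_lam[of X \<phi> d X lam 1 \<epsilon>] assms by simp
  then obtain p where p: "p \<in> {(I :: nat set, x, n). (\<forall>i\<in>I. x i \<in> X \<and> 1 \<le> n i) \<and>
                                X \<subseteq> (\<Union>i\<in>I. bowen_ball X d \<phi> (real (n i)) (x i) \<epsilon>)}"
    and p_sum: "(case p of (I, x, n) \<Rightarrow> infsum (\<lambda>i. ennreal (exp (- real (n i) * lam))) I) < 1"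
    unfolding bowen_M_N_def INF_less_iff by blast
  obtain I x n where "p = (I, x, n)"
    by (rule prod_cases3)
  with p p_sum have I: "\<And>i. i \<in> I \<Longrightarrow> x i \<in> X \<and> 1 \<le> n i"
    and cover: "X \<subseteq> (\<Union>i\<in>I. bowen_ball X d \<phi> (real (n i)) (x i) \<epsilon>)"
    and I_sum: "infsum (\<lambda>i. ennreal (exp (- real (n i) * lam))) I < 1"
    by simp_all
  obtain F where F: "F \<subseteq> I" "finite F" "X \<subseteq> (\<Union>i\<in>F. bowen_ball X d \<phi> (real (n i)) (x i) \<epsilon>)"
    using cover by (rule finite_subcover) (use I in \<open>auto intro: openin_bowen_ball\<close>)
  have "ennreal (\<Sum>i\<in>F. exp (- real (n i) * lam)) = (\<Sum>i\<in>F. ennreal (exp (- real (n i) * lam)))"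
    by (rule sum_ennreal[symmetric]) simp
  also have "\<dots> = infsum (\<lambda>i. ennreal (exp (- real (n i) * lam))) F"
    using F(2) by simp
  also have "\<dots> \<le> infsum (\<lambda>i. ennreal (exp (- real (n i) * lam))) I"
    using F(1) by (intro infsum_mono_neutral nonneg_summable_on_complete) auto
  also have "\<dots> < 1"
    by (rule I_sum)
  finally have "(\<Sum>i\<in>F. exp (- real (n i) * lam)) < 1"
    by (simp only: ennreal_less_one_iff)
  with F I show ?thesis
    by (intro that[of F x n]) auto
qed

definition itinerary_point :: "('a \<Rightarrow> nat) \<Rightarrow> 'a \<Rightarrow> nat \<Rightarrow> 'a" where
  "itinerary_point \<tau> y k = ((\<lambda>z. \<phi> z (real (\<tau> z))) ^^ k) y"

definition itinerary_time :: "('a \<Rightarrow> nat) \<Rightarrow> 'a \<Rightarrow> nat \<Rightarrow> nat" where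
  "itinerary_time \<tau> y k = (\<Sum>j<k. \<tau> (itinerary_point \<tau> y j))"

lemma itinerary_point_0 [simp]: "itinerary_point \<tau> y 0 = y"
  by (simp add: itinerary_point_def)

lemma itinerary_point_Suc:
  "itinerary_point \<tau> y (Suc k) = \<phi> (itinerary_point \<tau> y k) (real (\<tau> (itinerary_point \<tau> y k)))"
  by (simp add: itinerary_point_def)

lemma itinerary_time_0 [simp]: "itinerary_time \<tau> y 0 = 0"
  by (simp add: itinerary_time_def)

lemma itinerary_time_Suc:
  "itinerary_time \<tau> y (Suc k) = itinerary_time \<tau> y k + \<tau> (itinerary_point \<tau> y k)"
  by (simp add: itinerary_time_def)

lemma itinerary_point_in: "y \<in> X \<Longrightarrow> itinerary_point \<tau> y k \<in> X"
  by (induction k) (simp_all add: itinerary_point_Suc flow_in)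

lemma itinerary_point_eq_flow:
  assumes "y \<in> X"
  shows "itinerary_point \<tau> y k = \<phi> y (real (itinerary_time \<tau> y k))"
proof (induction k)
  case 0
  show ?case using assms by (simp add: flow_zero)
next
  case (Suc k)
  have "real (itinerary_time \<tau> y (Suc k)) = real (\<tau> (itinerary_point \<tau> y k)) + real (itinerary_time \<tau> y k)"
    by (simp add: itinerary_time_Suc add.commute)
  then have "\<phi> y (real (itinerary_time \<tau> y (Suc k)))
      = \<phi> (\<phi> y (real (itinerary_time \<tau> y k))) (real (\<tau> (itinerary_point \<tau> y k)))"
    using flow_add[OF assms] by simp
  also have "\<dots> = itinerary_point \<tau> y (Suc k)"
    by (simp only: Suc.IH[symmetric] itinerary_point_Suc)
  finally show ?case ..
qed

text \<open>On the \<open>j\<close>-th leg both points lie in the Bowen ball around the same centre.\<close>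
lemma bowen_dist_le_if_same_itinerary:
  fixes c :: "'a \<Rightarrow> 'i" and x :: "'i \<Rightarrow> 'a" and n :: "'i \<Rightarrow> nat"
  assumes y: "y \<in> X" and y': "y' \<in> X" and k: "0 < k"
    and ball: "\<And>z. z \<in> X \<Longrightarrow> x (c z) \<in> X \<and> z \<in> bowen_ball X d \<phi> (real (n (c z))) (x (c z)) \<epsilon>"
    and same: "\<And>j. j < k \<Longrightarrow>
      c (itinerary_point (\<lambda>z. n (c z)) y j) = c (itinerary_point (\<lambda>z. n (c z)) y' j)"
  shows "bowen_dist d \<phi> (real (itinerary_time (\<lambda>z. n (c z)) y k)) y y' \<le> 2 * \<epsilon>"
proof -
  define p where "p = itinerary_point (\<lambda>z. n (c z))"
  define t where "t = itinerary_time (\<lambda>z. n (c z))"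
  have near: "d (\<phi> (x (c z)) u) (\<phi> z u) < \<epsilon>" if "z \<in> X" "u \<in> {0..real (n (c z))}" for z u
    using ball[OF that(1)] flow_dist_le_bowen_dist[OF _ that(1,2)]
    by (fastforce simp: bowen_ball_def)
  have same_time: "t y j = t y' j" if "j \<le> k" for j
    unfolding t_def itinerary_time_def using same that by (intro sum.cong) auto
  show ?thesis
    unfolding t_def[symmetric]
  proof (rule bowen_dist_le)
    fix s assume s: "s \<in> {0..real (t y k)}"
    obtain j where j: "j < k" "real (t y j) \<le> s" "s \<le> real (t y (Suc j))"
      using bracketing_index_exists[of k "\<lambda>j. real (t y j)" s] k s by (auto simp: t_def)
    define u where "u = s - real (t y j)"
    have flow_s: "\<phi> w s = \<phi> (p w j) u" if "w \<in> X" "t w j = t y j" for w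
      using flow_add[OF that(1), of u "real (t w j)"] itinerary_point_eq_flow[OF that(1)] that(2)
      by (simp add: u_def p_def t_def)
    have u: "u \<in> {0..real (n (c (p y j)))}"
      using j by (simp add: u_def t_def p_def itinerary_time_Suc)
    have pj: "p y j \<in> X" "p y' j \<in> X"
      using y y' by (simp_all add: p_def itinerary_point_in)
    have "c (p y j) = c (p y' j)"
      using same[OF j(1)] by (simp add: p_def)
    then have "d (\<phi> (x (c (p y j))) u) (\<phi> (p y j) u) < \<epsilon>" "d (\<phi> (x (c (p y j))) u) (\<phi> (p y' j) u) < \<epsilon>"
      using near[OF pj(1) u] near[OF pj(2)] u by simp_all
    moreover have "x (c (p y j)) \<in> X"
      using ball[OF pj(1)] by simp
    ultimately have "d (\<phi> (p y j) u) (\<phi> (p y' j) u) \<le> 2 * \<epsilon>"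
      using triangle[of "\<phi> (p y j) u" "\<phi> (x (c (p y j))) u" "\<phi> (p y' j) u"]
        commute[of "\<phi> (p y j) u"] pj flow_in by fastforce
    then show "d (\<phi> y s) (\<phi> y' s) \<le> 2 * \<epsilon>"
      using flow_s[OF y] flow_s[OF y'] same_time[of j] j(1) by simp
  qed simp
qed

lemma span_num_le_card_image:
  assumes finite: "finite (w ` X)"
    and close: "\<And>y y'. y \<in> X \<Longrightarrow> y' \<in> X \<Longrightarrow> w y = w y' \<Longrightarrow> bowen_dist d \<phi> T y y' < \<delta>"
  shows "span_num X d \<phi> T \<delta> \<le> card (w ` X)"
proof -
  define rep where "rep v = (SOME y. y \<in> X \<and> w y = v)" for v
  have rep: "rep (w y) \<in> X \<and> w (rep (w y)) = w y" if "y \<in> X" for y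
    unfolding rep_def by (rule someI[of _ y]) (use that in simp)
  have "spanning T \<delta> (rep ` w ` X)"
    unfolding spanning_def
  proof (intro conjI ballI)
    show "finite (rep ` w ` X)" "rep ` w ` X \<subseteq> X"
      using finite rep by auto
    fix y assume "y \<in> X"
    then show "\<exists>y'\<in>rep ` w ` X. bowen_dist d \<phi> T y y' < \<delta>"
      using rep[OF \<open>y \<in> X\<close>] close[of y "rep (w y)"] by auto
  qed
  then have "span_num X d \<phi> T \<delta> \<le> card (rep ` w ` X)"
    by (rule span_num_le_card)
  also have "\<dots> \<le> card (w ` X)"
    by (rule card_image_le[OF finite])
  finally show ?thesis .
qed

definition first_passage :: "('a \<Rightarrow> nat) \<Rightarrow> real \<Rightarrow> 'a \<Rightarrow> nat" where
  "first_passage \<tau> T y = (LEAST k. T \<le> real (itinerary_time \<tau> y k))"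

lemma first_passage_itinerary_time:
  assumes y: "y \<in> X" and \<tau>: "\<And>z. z \<in> X \<Longrightarrow> 1 \<le> \<tau> z \<and> \<tau> z \<le> N" and T: "0 < T"
  shows "0 < first_passage \<tau> T y" "first_passage \<tau> T y \<le> nat \<lceil>T\<rceil>"
    "T \<le> real (itinerary_time \<tau> y (first_passage \<tau> T y))"
    "real (itinerary_time \<tau> y (first_passage \<tau> T y)) \<le> T + real N"
proof -
  have "itinerary_time \<tau> y k < itinerary_time \<tau> y (Suc k)"
    "itinerary_time \<tau> y (Suc k) \<le> itinerary_time \<tau> y k + N" for k
    using \<tau>[OF itinerary_point_in[OF y, of \<tau> k]] by (simp_all add: itinerary_time_Suc)
  from first_passage_bounds[of "itinerary_time \<tau> y", OF _ this T]
  show "0 < first_passage \<tau> T y" "first_passage \<tau> T y \<le> nat \<lceil>T\<rceil>"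
    "T \<le> real (itinerary_time \<tau> y (first_passage \<tau> T y))"
    "real (itinerary_time \<tau> y (first_passage \<tau> T y)) \<le> T + real N"
    unfolding first_passage_def by simp_all
qed

text \<open>The label \<open>c z\<close> of a point fixes both its Bowen ball and the time \<open>n (c z)\<close> until the
  next point of its itinerary.\<close>
definition itinerary_code :: "('a \<Rightarrow> 'i) \<Rightarrow> ('i \<Rightarrow> nat) \<Rightarrow> real \<Rightarrow> 'a \<Rightarrow> 'i list" where
  "itinerary_code c n T y =
     map (\<lambda>j. c (itinerary_point (\<lambda>z. n (c z)) y j)) [0..<first_passage (\<lambda>z. n (c z)) T y]"

lemma itinerary_code_in_words:
  fixes F :: "'i set" and n :: "'i \<Rightarrow> nat" and c :: "'a \<Rightarrow> 'i"
  assumes F: "finite F" and n: "\<And>i. i \<in> F \<Longrightarrow> 1 \<le> n i" and label: "\<forall>z\<in>X. c z \<in> F"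
    and y: "y \<in> X" and T: "0 < T"
  shows "set (itinerary_code c n T y) \<subseteq> F" "length (itinerary_code c n T y) \<le> nat \<lceil>T\<rceil>"
    "sum_list (map (\<lambda>i. real (n i)) (itinerary_code c n T y)) \<le> T + real (Max (n ` F))"
proof -
  have "1 \<le> n (c z) \<and> n (c z) \<le> Max (n ` F)" if "z \<in> X" for z
    using label that n F by simp
  note K = first_passage_itinerary_time[where \<tau> = "\<lambda>z. n (c z)", OF y this T]
  have "sum_list (map (\<lambda>i. real (n i)) (itinerary_code c n T y))
      = real (itinerary_time (\<lambda>z. n (c z)) y (first_passage (\<lambda>z. n (c z)) T y))"
    by (simp add: itinerary_code_def itinerary_time_def interv_sum_list_conv_sum_set_nat
        atLeast0LessThan o_def)
  then show "sum_list (map (\<lambda>i. real (n i)) (itinerary_code c n T y)) \<le> T + real (Max (n ` F))"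
    using K(4) by simp
  show "set (itinerary_code c n T y) \<subseteq> F" "length (itinerary_code c n T y) \<le> nat \<lceil>T\<rceil>"
    using label itinerary_point_in[OF y] K(2) by (auto simp: itinerary_code_def)
qed

lemma bowen_dist_less_if_same_itinerary_code:
  fixes F :: "'i set" and x :: "'i \<Rightarrow> 'a" and n :: "'i \<Rightarrow> nat" and c :: "'a \<Rightarrow> 'i"
  assumes F: "finite F" and n: "\<And>i. i \<in> F \<Longrightarrow> 1 \<le> n i"
    and label: "\<forall>z\<in>X. c z \<in> F \<and> x (c z) \<in> X \<and> z \<in> bowen_ball X d \<phi> (real (n (c z))) (x (c z)) \<epsilon>"
    and y: "y \<in> X" "y' \<in> X" and same: "itinerary_code c n T y = itinerary_code c n T y'"
    and T: "0 < T" and \<epsilon>: "0 < \<epsilon>"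
  shows "bowen_dist d \<phi> T y y' < 3 * \<epsilon>"
proof -
  define K where "K = first_passage (\<lambda>z. n (c z)) T"
  have "1 \<le> n (c z) \<and> n (c z) \<le> Max (n ` F)" if "z \<in> X" for z
    using label that n F by simp
  note K = first_passage_itinerary_time[where \<tau> = "\<lambda>z. n (c z)", OF _ this T, folded K_def]
  from same have "K y = K y'"
    unfolding itinerary_code_def K_def by (metis length_map length_upt diff_zero)
  with same have "c (itinerary_point (\<lambda>z. n (c z)) y j) = c (itinerary_point (\<lambda>z. n (c z)) y' j)"
    if "j < K y" for j
    using that by (simp add: itinerary_code_def K_def map_eq_conv)
  then have "bowen_dist d \<phi> (real (itinerary_time (\<lambda>z. n (c z)) y (K y))) y y' \<le> 2 * \<epsilon>"
    using label
    by (intro bowen_dist_le_if_same_itinerary[where c = c and x = x and n = n, OF y K(1)[OF y(1)]])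
      auto
  moreover have "bowen_dist d \<phi> T y y' \<le> bowen_dist d \<phi> (real (itinerary_time (\<lambda>z. n (c z)) y (K y))) y y'"
    using K(3)[OF y(1)] T y by (intro bowen_dist_mono) auto
  ultimately show ?thesis
    using \<epsilon> by linarith
qed

lemma span_num_le_card_words:
  fixes F :: "'i set" and x :: "'i \<Rightarrow> 'a" and n :: "'i \<Rightarrow> nat" and c :: "'a \<Rightarrow> 'i"
  assumes F: "finite F" and n: "\<And>i. i \<in> F \<Longrightarrow> 1 \<le> n i"
    and label: "\<forall>z\<in>X. c z \<in> F \<and> x (c z) \<in> X \<and> z \<in> bowen_ball X d \<phi> (real (n (c z))) (x (c z)) \<epsilon>"
    and T: "0 < T" and \<epsilon>: "0 < \<epsilon>"
  shows "span_num X d \<phi> T (3 * \<epsilon>) \<le> card {w. set w \<subseteq> F \<and> length w \<le> nat \<lceil>T\<rceil> \<and>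
           sum_list (map (\<lambda>i. real (n i)) w) \<le> T + real (Max (n ` F))}"
    (is "_ \<le> card ?Words")
proof -
  have "itinerary_code c n T ` X \<subseteq> ?Words"
  proof (rule image_subsetI)
    fix y assume "y \<in> X"
    then show "itinerary_code c n T y \<in> ?Words"
      using itinerary_code_in_words[where c = c and n = n, OF F n _ _ T] label by auto
  qed
  moreover have "finite ?Words"
    by (rule finite_subset[OF _ finite_lists_length_le[OF F, of "nat \<lceil>T\<rceil>"]]) auto
  ultimately have "finite (itinerary_code c n T ` X)"
    by (rule finite_subset)
  then have "span_num X d \<phi> T (3 * \<epsilon>) \<le> card (itinerary_code c n T ` X)"
    using bowen_dist_less_if_same_itinerary_code[where c = c and n = n, OF F n label _ _ _ T \<epsilon>]
    by (rule span_num_le_card_image)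
  also have "\<dots> \<le> card ?Words"
    by (rule card_mono) fact+
  finally show ?thesis .
qed

lemma span_num_le_of_finite_cover:
  fixes F :: "'i set" and x :: "'i \<Rightarrow> 'a" and n :: "'i \<Rightarrow> nat"
  assumes F: "finite F" and x: "\<And>i. i \<in> F \<Longrightarrow> x i \<in> X" and n: "\<And>i. i \<in> F \<Longrightarrow> 1 \<le> n i"
    and cover: "X \<subseteq> (\<Union>i\<in>F. bowen_ball X d \<phi> (real (n i)) (x i) \<epsilon>)"
    and lam: "0 \<le> lam" and sum: "(\<Sum>i\<in>F. exp (- real (n i) * lam)) \<le> 1"
    and T: "0 < T" and \<epsilon>: "0 < \<epsilon>"
  shows "real (span_num X d \<phi> T (3 * \<epsilon>)) \<le> (T + 2) * exp ((T + real (Max (n ` F))) * lam)"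
proof -
  have "\<exists>c. \<forall>z\<in>X. c z \<in> F \<and> z \<in> bowen_ball X d \<phi> (real (n (c z))) (x (c z)) \<epsilon>"
    using cover by (intro bchoice) blast
  then obtain c where "\<forall>z\<in>X. c z \<in> F \<and> z \<in> bowen_ball X d \<phi> (real (n (c z))) (x (c z)) \<epsilon>"
    ..
  then have "\<forall>z\<in>X. c z \<in> F \<and> x (c z) \<in> X \<and> z \<in> bowen_ball X d \<phi> (real (n (c z))) (x (c z)) \<epsilon>"
    using x by blast
  from span_num_le_card_words[where c = c and n = n, OF F n this T \<epsilon>]
  have "real (span_num X d \<phi> T (3 * \<epsilon>))
      \<le> real (card {w. set w \<subseteq> F \<and> length w \<le> nat \<lceil>T\<rceil> \<and>
                  sum_list (map (\<lambda>i. real (n i)) w) \<le> T + real (Max (n ` F))})"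
    by (simp only: of_nat_le_iff)
  also have "\<dots> \<le> (real (nat \<lceil>T\<rceil>) + 1) * exp ((T + real (Max (n ` F))) * lam)"
    using F lam sum by (rule card_weighted_lists_le_bounded_length)
  also have "\<dots> \<le> (T + 2) * exp ((T + real (Max (n ` F))) * lam)"
  proof (rule mult_right_mono)
    show "real (nat \<lceil>T\<rceil>) + 1 \<le> T + 2"
      using T by linarith
  qed simp
  finally show ?thesis .
qed

lemma span_rate_le_if_bowen_M_lam_eq_0:
  assumes \<epsilon>: "0 < \<epsilon>" and zero: "bowen_M_lam X \<phi> d X lam \<epsilon> = 0"
  shows "span_rate X d \<phi> (3 * \<epsilon>) \<le> ereal lam"
proof -
  obtain F :: "nat set" and x n where F: "finite F" and xn: "\<forall>i\<in>F. x i \<in> X \<and> 1 \<le> n i"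
    and cover: "X \<subseteq> (\<Union>i\<in>F. bowen_ball X d \<phi> (real (n i)) (x i) \<epsilon>)"
    and sum: "(\<Sum>i\<in>F. exp (- real (n i) * lam)) < 1"
    by (rule finite_cover_if_bowen_M_lam_eq_0[OF zero])
  have "0 \<le> lam"
  proof (rule ccontr)
    assume "\<not> 0 \<le> lam"
    then have "(\<Sum>i\<in>F. 1) \<le> (\<Sum>i\<in>F. exp (- real (n i) * lam))"
      by (intro sum_mono) (simp add: mult_nonneg_nonpos)
    moreover have "F \<noteq> {}"
      using cover nonempty by auto
    then have "1 \<le> real (card F)"
      using F by (simp add: Suc_le_eq card_gt_0_iff)
    ultimately show False
      using sum by simp
  qed
  have "\<forall>\<^sub>F T in at_top. 0 < real (span_num X d \<phi> T (3 * \<epsilon>)) \<and>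
          real (span_num X d \<phi> T (3 * \<epsilon>)) \<le> (T + 2) * exp ((T + real (Max (n ` F))) * lam)"
    using eventually_gt_at_top[of 0]
  proof eventually_elim
    case (elim T)
    show ?case
      using span_num_pos[of T "3 * \<epsilon>"] \<epsilon> elim \<open>0 \<le> lam\<close> sum xn
      by (auto intro!: span_num_le_of_finite_cover[OF F _ _ cover])
  qed
  then show ?thesis
    unfolding span_rate_def by (rule Limsup_ln_div_le_of_bound[rotated]) simp
qed

lemma span_rate_le_bowen_M:
  assumes "0 < \<epsilon>"
  shows "span_rate X d \<phi> (3 * \<epsilon>) \<le> bowen_M X \<phi> d X \<epsilon>"
  unfolding bowen_M_def
  by (rule Inf_greatest) (auto intro: span_rate_le_if_bowen_M_lam_eq_0[OF assms])

end

theorem proposition2p12: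
  fixes X :: "'a set" and d :: "'a \<Rightarrow> 'a \<Rightarrow> real" and \<phi> :: "'a \<Rightarrow> real \<Rightarrow> 'a"
  assumes "Metric_space X d"
    and "compact_space (Metric_space.mtopology X d)"
    and "X \<noteq> {}"
    and "is_flow X d \<phi>"
  shows "upper_mdim_M \<phi> X d = upper_mdim_B X \<phi> X d"
proof -
  interpret compact_flow X d \<phi>
    using assms by (simp add: compact_flow_def compact_flow_axioms_def)
  have pos: "\<forall>\<^sub>F \<epsilon> in at_right 0. 0 < (\<epsilon>::real)"
    by (rule eventually_at_right_less)
  have bowen_le_span: "\<forall>\<^sub>F \<epsilon> in at_right 0. bowen_M X \<phi> d X \<epsilon> \<le> span_rate X d \<phi> \<epsilon>"
    using pos by eventually_elim (rule bowen_M_le_span_rate)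
  have span_le_bowen: "\<forall>\<^sub>F \<epsilon> in at_right 0. span_rate X d \<phi> (3 * \<epsilon>) \<le> bowen_M X \<phi> d X \<epsilon>"
    using pos by eventually_elim (rule span_rate_le_bowen_M)
  have span_nonneg: "\<forall>\<^sub>F \<epsilon> in at_right 0. 0 \<le> span_rate X d \<phi> \<epsilon>"
    using pos by eventually_elim (rule span_rate_nonneg)
  have "upper_mdim_M \<phi> X d
      \<le> Limsup (at_right 0) (\<lambda>\<epsilon>. span_rate X d \<phi> (3 * \<epsilon>) / ereal (ln (1 / \<epsilon>)))"
    unfolding upper_mdim_M_def by (rule Limsup_at_right_0_div_ln_rescale[OF _ span_nonneg]) simp
  also have "\<dots> \<le> upper_mdim_B X \<phi> X d"
    unfolding upper_mdim_B_def using span_le_bowen by (rule Limsup_at_right_0_div_ln_mono)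
  finally have "upper_mdim_M \<phi> X d \<le> upper_mdim_B X \<phi> X d" .
  moreover have "upper_mdim_B X \<phi> X d \<le> upper_mdim_M \<phi> X d"
    unfolding upper_mdim_B_def upper_mdim_M_def using bowen_le_span by (rule Limsup_at_right_0_div_ln_mono)
  ultimately show ?thesis
    by (rule antisym)
qed

end
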